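(* If $k\ge4$, then in the setting of the context, $0<\lim_{p\to\infty}\gamma_p(k)\le 3$.
   Context: For integers $k\ge2$, $n\ge1$ and $x\in\mathbb R$: $P_{n,k}(x)=\left(1+\frac{x^{n-1}}{2}\right)^{k+1}-\left(1-\frac{x^{n-1}}{2}\right)^{k+1}$, and for $n>k$: $Q_{n,k}(x)=(k+1)x^{n-k}$. Fix an integer $k\ge2$ and, for each integer $n>k$, an arbitrary $\xi(k;n)\in(0,1)$ with $P_{n,k}(\xi(k;n))=Q_{n,k}(\xi(k;n))$. Let $\alpha=\limsup_{n\to\infty}\xi(k;n)^{n-1}$ and let $(n_p)_{p\in\mathbb N}$ be a strictly increasing sequence of integers $>k$ with $\xi(k;n_p)^{n_p-1}\to\alpha$. For $n>k$ put $$C_n(k)=\frac{\xi(k;n)^{3n-k-2}}{\frac{1}{k+2}\left[\left(1+\frac{\xi(k;n)^{n-1}}{2}\right)^{k+2}-\left(1-\frac{\xi(k;n)^{n-1}}{2}\right)^{k+2}\right]-\xi(k;n)^{n-k}},$$ and $\gamma_p(k)=C_{n_p}(k)$ for $p\in\mathbb N$. *)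

theory Defs
  imports "HOL-Analysis.Analysis"
begin

definition P_poly :: "nat \<Rightarrow> nat \<Rightarrow> real \<Rightarrow> real" where
  "P_poly n k x = (1 + x ^ (n - 1) / 2) ^ (k + 1) - (1 - x ^ (n - 1) / 2) ^ (k + 1)"

definition Q_poly :: "nat \<Rightarrow> nat \<Rightarrow> real \<Rightarrow> real" where
  "Q_poly n k x = real (k + 1) * x ^ (n - k)"

definition C_const :: "nat \<Rightarrow> nat \<Rightarrow> real \<Rightarrow> real" where
  "C_const n k xi = xi ^ (3 * n - k - 2) /
     ((1 / real (k + 2)) * ((1 + xi ^ (n - 1) / 2) ^ (k + 2) - (1 - xi ^ (n - 1) / 2) ^ (k + 2))
      - xi ^ (n - k))"

end

theory Submission imports Defs begin

(*
  Write y = xi^(n-1) and t = y/2, and let D_m(t) = (1+t)^m - (1-t)^m.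
  The root equation P_{n,k}(xi) = Q_{n,k}(xi) says xi^(k-1) * D_{k+1}(t) = (k+1) y.
  (1) Rewriting C_n(k) with this identity gives C_n(k) = 4 t^2 D_{k+1}(t) / N_k(t),
      where N_k(t) = (k+1)/(k+2) D_{k+2}(t) - D_{k+1}(t) no longer depends on n.
  (2) Since N_k' = (k+1) t D_k and D_m(t)/t -> 2m, l'Hopital gives
      N_k(t)/t^3 -> 2k(k+1)/3, hence 4 t^2 D_{k+1}(t)/N_k(t) -> 12/k as t -> 0+.
  (3) The cubic lower bound D_m(t) >= 2mt + 2t^3 (m >= 3) turns the root equation into
      y^(k-1) (1 + y^2/(4(k+1)))^(n-1) <= 1, and by Bernoulli's inequality this forces
      y -> 0 along any sequence of n tending to infinity; in particular alpha = 0.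
*)

section \<open>The odd binomial difference\<close>

definition binom_diff :: "nat \<Rightarrow> real \<Rightarrow> real" where
  "binom_diff m t = (1 + t) ^ m - (1 - t) ^ m"

text \<open>The even counterpart, needed only to run the induction for the lower bound.\<close>
definition binom_sum :: "nat \<Rightarrow> real \<Rightarrow> real" where
  "binom_sum m t = (1 + t) ^ m + (1 - t) ^ m"

lemma binom_diff_deriv:
  "DERIV (binom_diff m) x :> real m * (1 + x) ^ (m - 1) + real m * (1 - x) ^ (m - 1)"
  unfolding binom_diff_def by (auto intro!: derivative_eq_intros)

text \<open>Since \<open>binom_diff m 0 = 0\<close>, its difference quotient at 0 is \<open>binom_diff m t / t\<close>.\<close>
lemma binom_diff_over_t_limit: "((\<lambda>t. binom_diff m t / t) \<longlongrightarrow> 2 * real m) (at 0)"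
  using DERIV_D[OF binom_diff_deriv[of m 0]] by (simp add: binom_diff_def)

text \<open>The first terms of the binomial expansions are lower bounds for \<open>t \<ge> 0\<close>;
  the two bounds are proved together since each step of \<open>m\<close> mixes them.\<close>
lemma binom_lower_bounds:
  fixes t :: real
  assumes t: "t \<ge> 0"
  shows "binom_sum m t \<ge> 2 + real m * (real m - 1) * t^2"
    and "binom_diff m t \<ge> 2 * real m * t + real m * (real m - 1) * (real m - 2) / 3 * t^3"
proof (induction m)
  case 0
  { case 1 show ?case by (simp add: binom_sum_def) }
  { case 2 show ?case by (simp add: binom_diff_def) }
next
  case (Suc m)
  have step_sum: "binom_sum (Suc m) t = binom_sum m t + t * binom_diff m t"
    and step_diff: "binom_diff (Suc m) t = binom_diff m t + t * binom_sum m t"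
    by (simp_all add: binom_sum_def binom_diff_def algebra_simps)
  have cubic_nonneg: "real m * (real m - 1) * (real m - 2) \<ge> 0"
  proof -
    have "m = 0 \<or> m = 1 \<or> m \<ge> 2" by auto
    then show ?thesis by (auto intro: mult_nonneg_nonneg)
  qed
  have "t * binom_diff m t \<ge> t * (2 * real m * t + real m * (real m - 1) * (real m - 2) / 3 * t^3)"
    using Suc.IH(2) t by (rule mult_left_mono)
  moreover have "t * (real m * (real m - 1) * (real m - 2) / 3 * t^3) \<ge> 0"
    using cubic_nonneg t by simp
  moreover have "t * (2 * real m * t + real m * (real m - 1) * (real m - 2) / 3 * t^3)
      = 2 * real m * t^2 + t * (real m * (real m - 1) * (real m - 2) / 3 * t^3)"
    by (simp add: distrib_left power2_eq_square)
  ultimately have "t * binom_diff m t \<ge> 2 * real m * t^2"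
    by linarith
  then show "binom_sum (Suc m) t \<ge> 2 + real (Suc m) * (real (Suc m) - 1) * t^2"
    using Suc.IH(1) by (simp add: step_sum algebra_simps)
  have "t * binom_sum m t \<ge> t * (2 + real m * (real m - 1) * t^2)"
    using Suc.IH(1) t by (rule mult_left_mono)
  then show "binom_diff (Suc m) t
      \<ge> 2 * real (Suc m) * t + real (Suc m) * (real (Suc m) - 1) * (real (Suc m) - 2) / 3 * t^3"
    using Suc.IH(2) by (simp add: step_diff field_simps power2_eq_square power3_eq_cube)
qed

lemma binom_diff_cubic_lower_bound:
  fixes t :: real
  assumes "t \<ge> 0" "m \<ge> 3"
  shows "binom_diff m t \<ge> 2 * real m * t + 2 * t^3"
proof -
  have "real m * (real m - 1) * (real m - 2) \<ge> 3 * 2 * 1"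
    using assms by (intro mult_mono) auto
  then have "real m * (real m - 1) * (real m - 2) / 3 * t^3 \<ge> 2 * t^3"
    using assms by (intro mult_right_mono) auto
  then show ?thesis using binom_lower_bounds(2)[OF assms(1), of m] by linarith
qed

section \<open>The denominator of the reduced constant\<close>

definition reduced_denom :: "nat \<Rightarrow> real \<Rightarrow> real" where
  "reduced_denom k t = real (k+1) / real (k+2) * binom_diff (k+2) t - binom_diff (k+1) t"

lemma reduced_denom_deriv: "DERIV (reduced_denom k) x :> real (k+1) * x * binom_diff k x"
proof -
  have "DERIV (reduced_denom k) x :>
      real (k+1) / real (k+2) * (real (k+2) * (1 + x) ^ (k+1) + real (k+2) * (1 - x) ^ (k+1))
      - (real (k+1) * (1 + x) ^ k + real (k+1) * (1 - x) ^ k)"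
    unfolding reduced_denom_def using binom_diff_deriv[of "k+2" x] binom_diff_deriv[of "k+1" x]
    by (auto intro!: derivative_eq_intros)
  moreover have "real (k+1) / real (k+2) * (real (k+2) * (1 + x) ^ (k+1) + real (k+2) * (1 - x) ^ (k+1))
      - (real (k+1) * (1 + x) ^ k + real (k+1) * (1 - x) ^ k) = real (k+1) * x * binom_diff k x"
    by (simp add: binom_diff_def field_simps)
  ultimately show ?thesis by simp
qed

text \<open>The denominator vanishes to third order at 0; by l'Hopital's rule applied to
  its derivative \<open>(k+1) t binom_diff k t\<close> against \<open>3 t^2\<close>.\<close>
lemma reduced_denom_over_cube_limit:
  "((\<lambda>t. reduced_denom k t / t ^ 3) \<longlongrightarrow> 2 * real k * real (k+1) / 3) (at_right 0)"
proof (rule lhopital_right_0)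
  have "isCont (reduced_denom k) 0"
    using reduced_denom_deriv DERIV_isCont by blast
  then show "(reduced_denom k \<longlongrightarrow> 0) (at_right 0)"
    by (auto simp: isCont_def reduced_denom_def binom_diff_def intro: tendsto_mono[OF at_within_le_at])
  show "((\<lambda>t::real. t ^ 3) \<longlongrightarrow> 0) (at_right 0)"
    by (auto intro!: tendsto_eq_intros)
  show "eventually (\<lambda>x::real. x ^ 3 \<noteq> 0) (at_right 0)"
    and "eventually (\<lambda>x::real. 3 * x^2 \<noteq> 0) (at_right 0)"
    by (auto simp: eventually_at_right_field intro!: exI[of _ 1])
  show "eventually (\<lambda>x. DERIV (reduced_denom k) x :> real (k+1) * x * binom_diff k x) (at_right 0)"
    using reduced_denom_deriv by (intro always_eventually) blast
  show "eventually (\<lambda>x. DERIV (\<lambda>t. t^3) x :> 3 * x^2) (at_right 0)"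
    by (auto intro!: derivative_eq_intros always_eventually)
  have "((\<lambda>t. real (k+1) / 3 * (binom_diff k t / t)) \<longlongrightarrow> real (k+1) / 3 * (2 * real k)) (at_right 0)"
    by (intro tendsto_intros tendsto_mono[OF at_within_le_at binom_diff_over_t_limit])
  moreover have "eventually (\<lambda>t. real (k+1) / 3 * (binom_diff k t / t)
      = real (k+1) * t * binom_diff k t / (3 * t\<^sup>2)) (at_right 0)"
    by (auto simp: eventually_at_right_field power2_eq_square intro!: exI[of _ 1])
  ultimately show "((\<lambda>t. real (k+1) * t * binom_diff k t / (3 * t\<^sup>2))
      \<longlongrightarrow> 2 * real k * real (k+1) / 3) (at_right 0)"
    by (simp add: tendsto_cong mult.commute mult.left_commute)
qed

text \<open>The limit of the reduced constant: numerator and denominator both behave like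
  a multiple of \<open>t^3\<close>.\<close>
lemma reduced_constant_limit:
  assumes "k \<ge> 1"
  shows "((\<lambda>t. 4 * t^2 * binom_diff (k+1) t / reduced_denom k t) \<longlongrightarrow> 12 / real k) (at_right 0)"
proof -
  have "((\<lambda>t. 4 * (binom_diff (k+1) t / t) / (reduced_denom k t / t^3))
      \<longlongrightarrow> 4 * (2 * real (k+1)) / (2 * real k * real (k+1) / 3)) (at_right 0)"
    using assms
    by (intro tendsto_intros tendsto_mono[OF at_within_le_at binom_diff_over_t_limit]
        reduced_denom_over_cube_limit) auto
  moreover have "4 * (2 * real (k+1)) / (2 * real k * real (k+1) / 3) = 12 / real k"
    using assms by (simp add: divide_simps; simp add: algebra_simps)
  moreover have "eventually (\<lambda>t. 4 * (binom_diff (k+1) t / t) / (reduced_denom k t / t^3)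
      = 4 * t^2 * binom_diff (k+1) t / reduced_denom k t) (at_right 0)"
    by (auto simp: eventually_at_right_field field_simps power3_eq_cube power2_eq_square
        intro!: exI[of _ 1])
  ultimately show ?thesis by (simp add: tendsto_cong)
qed

section \<open>A vanishing criterion for sequences\<close>

text \<open>If \<open>y^j (1 + c y^2)^e \<le> 1\<close> with exponents \<open>e\<close> tending to infinity, then \<open>y \<rightarrow> 0\<close>:
  by Bernoulli's inequality \<open>y^(j+2) \<le> 1/(c e)\<close>.\<close>
lemma power_bound_forces_zero:
  fixes y :: "nat \<Rightarrow> real" and e :: "nat \<Rightarrow> nat" and c :: real
  assumes y_pos: "\<And>p. 0 < y p" and c_pos: "0 < c"
    and e_top: "filterlim e at_top sequentially"
    and bound: "\<And>p. y p ^ j * (1 + c * (y p)^2) ^ e p \<le> 1"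
  shows "y \<longlonglongrightarrow> 0"
proof -
  have power_small: "y p ^ (j+2) \<le> inverse (c * real (e p))" if "e p > 0" for p
  proof -
    have "1 + real (e p) * (c * (y p)^2) \<le> (1 + c * (y p)^2) ^ e p"
      using c_pos by (intro Bernoulli_inequality) (smt (verit) mult_nonneg_nonneg zero_le_power2)
    then have "y p ^ j * (1 + real (e p) * (c * (y p)^2)) \<le> 1"
      using bound[of p] y_pos[of p] by (meson mult_left_mono order_trans zero_le_power less_imp_le)
    moreover have "(c * real (e p)) * y p ^ (j+2) \<le> y p ^ j * (1 + real (e p) * (c * (y p)^2))"
      using y_pos[of p] by (simp add: algebra_simps power_add power2_eq_square)
    ultimately have "(c * real (e p)) * y p ^ (j+2) \<le> 1"
      by linarith
    then show ?thesis
      using c_pos that by (simp add: field_simps)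
  qed
  have bound_to_zero: "(\<lambda>p. inverse (c * real (e p))) \<longlonglongrightarrow> 0"
    using c_pos
    by (intro tendsto_inverse_0_at_top filterlim_tendsto_pos_mult_at_top[OF tendsto_const]
        filterlim_compose[OF filterlim_real_sequentially e_top])
  have upper: "eventually (\<lambda>p. y p ^ (j+2) \<le> inverse (c * real (e p))) sequentially"
    using e_top[unfolded filterlim_at_top, rule_format, of 1]
    by (rule eventually_mono) (rule power_small, simp)
  have lower: "eventually (\<lambda>p. 0 \<le> y p ^ (j+2)) sequentially"
    by (intro always_eventually allI zero_le_power less_imp_le[OF y_pos])
  have "(\<lambda>p. y p ^ (j+2)) \<longlonglongrightarrow> 0"
    using real_tendsto_sandwich[OF lower upper tendsto_const bound_to_zero] .
  then have "(\<lambda>p. root (j+2) (y p ^ (j+2))) \<longlonglongrightarrow> root (j+2) 0"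
    by (rule tendsto_real_root)
  moreover have "root (j+2) (y p ^ (j+2)) = y p" for p
    using y_pos[of p] by (intro real_root_power_cancel) auto
  ultimately show ?thesis
    by (simp only: real_root_zero)
qed

section \<open>Consequences of the root equation\<close>

text \<open>With \<open>y = x^(n-1)\<close>, the root equation \<open>P_{n,k}(x) = Q_{n,k}(x)\<close> reads
  \<open>x^(k-1) binom_diff (k+1) (y/2) = (k+1) y\<close>, since \<open>x^(n-k) x^(k-1) = y\<close>.\<close>
lemma root_equation_reduced:
  fixes x :: real
  assumes "n > k" "k \<ge> 1" "P_poly n k x = Q_poly n k x"
  shows "x^(k-1) * binom_diff (k+1) (x^(n-1) / 2) = real (k+1) * x^(n-1)"
proof -
  have "x^(n-k) * x^(k-1) = x^(n-1)"
    using assms(1,2) by (simp add: power_add[symmetric])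
  then show ?thesis
    using assms(3) by (simp add: P_poly_def Q_poly_def binom_diff_def algebra_simps)
qed

lemma C_const_at_root:
  fixes x :: real
  assumes nk: "n > k" and k1: "k \<ge> 1" and x_pos: "0 < x"
    and root: "P_poly n k x = Q_poly n k x"
  defines "t \<equiv> x^(n-1) / 2"
  shows "C_const n k x = 4 * t^2 * binom_diff (k+1) t / reduced_denom k t"
proof -
  define w where "w = x^(k-1)"
  have w_pos: "w > 0" using x_pos by (simp add: w_def)
  have "w * binom_diff (k+1) t = real (k+1) * (2 * t)"
    using root_equation_reduced[OF nk k1 root] by (simp add: t_def w_def)
  then have D: "binom_diff (k+1) t = real (k+1) * (2 * t) / w"
    using w_pos by (simp add: field_simps)
  have lin: "x^(n-k) = 2 * t / w"
  proof -
    have "x^(n-k) * w = 2 * t"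
      using nk k1 by (simp add: t_def w_def power_add[symmetric])
    then show ?thesis using w_pos by (simp add: field_simps)
  qed
  have cub: "x^(3*n-k-2) = (2 * t)^3 / w"
  proof -
    have "3*n-k-2 + (k-1) = (n-1) * 3" using nk k1 by simp
    then have "x^(3*n-k-2) * w = (2 * t)^3"
      by (simp add: t_def w_def power_add[symmetric] power_mult)
    then show ?thesis using w_pos by (simp add: field_simps)
  qed
  have "C_const n k x = (2 * t)^3 / w / (binom_diff (k+2) t / real (k+2) - 2 * t / w)"
    unfolding C_const_def lin cub by (simp add: t_def binom_diff_def)
  also have "\<dots> = (real (k+1) * ((2 * t)^3 / w))
      / (real (k+1) * (binom_diff (k+2) t / real (k+2) - 2 * t / w))"
    by (rule mult_divide_mult_cancel_left[symmetric]) simp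
  also have "\<dots> = 4 * t^2 * binom_diff (k+1) t / reduced_denom k t"
  proof -
    have "reduced_denom k t = real (k+1) * (binom_diff (k+2) t / real (k+2) - 2 * t / w)"
      unfolding reduced_denom_def D by (simp add: field_simps)
    moreover have "4 * t^2 * binom_diff (k+1) t = real (k+1) * ((2 * t)^3 / w)"
      unfolding D by (simp add: field_simps power2_eq_square power3_eq_cube)
    ultimately show ?thesis by (simp only:)
  qed
  finally show ?thesis .
qed

text \<open>At a root, the cubic lower bound for \<open>binom_diff\<close> yields the inequality that drives
  \<open>x^(n-1)\<close> to zero.\<close>
lemma root_power_bound:
  fixes x :: real
  assumes nk: "n > k" and k2: "k \<ge> 2" and x_pos: "0 < x"
    and root: "P_poly n k x = Q_poly n k x"
  defines "y \<equiv> x^(n-1)"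
  shows "y^(k-1) * (1 + 1 / (4 * real (k+1)) * y^2)^(n-1) \<le> 1"
proof -
  define w where "w = x^(k-1)"
  have y_pos: "y > 0" and w_pos: "w > 0" using x_pos by (simp_all add: y_def w_def)
  have "(real (k+1) * y) * (w * (1 + 1 / (4 * real (k+1)) * y^2))
      = w * (2 * real (k+1) * (y/2) + 2 * (y/2)^3)"
    by (simp add: field_simps power2_eq_square power3_eq_cube)
  also have "\<dots> \<le> w * binom_diff (k+1) (y/2)"
    using binom_diff_cubic_lower_bound[of "y/2" "k+1"] y_pos w_pos k2
    by (intro mult_left_mono) auto
  also have "\<dots> = real (k+1) * y"
    using root_equation_reduced[OF nk _ root] k2 by (simp add: y_def w_def)
  finally have "(real (k+1) * y) * (w * (1 + 1 / (4 * real (k+1)) * y^2)) \<le> (real (k+1) * y) * 1"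
    by simp
  then have "w * (1 + 1 / (4 * real (k+1)) * y^2) \<le> 1"
    by (rule mult_left_le_imp_le) (simp add: y_pos)
  then have "(w * (1 + 1 / (4 * real (k+1)) * y^2))^(n-1) \<le> 1"
    using w_pos by (intro power_le_one) auto
  moreover have "w^(n-1) = y^(k-1)"
    by (simp add: w_def y_def power_mult[symmetric] mult.commute)
  ultimately show ?thesis
    by (simp add: power_mult_distrib)
qed

theorem corollary5p7:
  fixes k :: nat and \<xi> :: "nat \<Rightarrow> real" and np :: "nat \<Rightarrow> nat"
  assumes hk: "k \<ge> 4"
    and hxi: "\<And>n. n > k \<Longrightarrow> 0 < \<xi> n \<and> \<xi> n < 1 \<and> P_poly n k (\<xi> n) = Q_poly n k (\<xi> n)"
    and hmono: "strict_mono np"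
    and hgt: "\<And>p. np p > k"
    and hlim: "(\<lambda>p. ereal (\<xi> (np p) ^ (np p - 1)))
                 \<longlonglongrightarrow> limsup (\<lambda>n. ereal (\<xi> n ^ (n - 1)))"
  shows "\<exists>L. (\<lambda>p. C_const (np p) k (\<xi> (np p))) \<longlonglongrightarrow> L \<and> 0 < L \<and> L \<le> 3"
proof -
  define y where "y p = \<xi> (np p) ^ (np p - 1)" for p
  have y_pos: "0 < y p" for p
    using hxi[OF hgt[of p]] by (simp add: y_def)
  have exponent_top: "filterlim (\<lambda>p. np p - 1) at_top sequentially"
    by (rule filterlim_compose[OF filterlim_minus_const_nat_at_top filterlim_subseq[OF hmono]])
  have bound: "y p ^ (k-1) * (1 + 1 / (4 * real (k+1)) * (y p)^2) ^ (np p - 1) \<le> 1" for p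
    unfolding y_def using root_power_bound[OF hgt[of p]] hxi[OF hgt[of p]] hk by simp
  have "y \<longlonglongrightarrow> 0"
    by (rule power_bound_forces_zero[OF y_pos _ exponent_top bound]) simp
  then have "filterlim (\<lambda>p. y p / 2) (at_right 0) sequentially"
    using y_pos by (intro tendsto_imp_filterlim_at_right tendsto_divide_zero always_eventually) auto
  from filterlim_compose[OF reduced_constant_limit this]
  have "(\<lambda>p. C_const (np p) k (\<xi> (np p))) \<longlonglongrightarrow> 12 / real k"
    using C_const_at_root[OF hgt] hxi[OF hgt] hk by (simp add: y_def)
  moreover have "0 < 12 / real k" "12 / real k \<le> 3"
    using hk by (auto simp: field_simps)
  ultimately show ?thesis by blast
qed

end
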